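(* Let $X$ be an admissible complete CAT(1) space and $T\colon X\to X$ a vicinal mapping. Then $\mathrm{Fix}(T)$ is nonempty if and only if there exists $x\in X$ such that the sequence $\{T^nx\}$ is spherically bounded and $\sup_{n\in\mathbb N} d(T^nx,T^{n-1}x)<\pi/2$.
   Context: A CAT(1) space is a $\pi$-geodesic metric space in which every geodesic triangle of perimeter $<2\pi$ satisfies the CAT(1) comparison inequality relative to its comparison triangle in the unit sphere $\mathbb S^2$ with spherical metric. It is admissible if $d(v,v')<\pi/2$ for all $v,v'\in X$. A sequence $\{x_n\}$ is spherically bounded if $\inf_{y\in X}\limsup_{n\to\infty} d(x_n,y)<\pi/2$. $\mathrm{Fix}(T)=\{u: Tu=u\}$. With $C_z=\cos d(Tz,z)$, $T$ is vicinal if for all $x,y\in X$: $\bigl(C_x^2(1+C_y^2)+C_y^2(1+C_x^2)\bigr)\cos d(Tx,Ty)\ge C_x^2(1+C_y^2)\cos d(Tx,y)+C_y^2(1+C_x^2)\cos d(Ty,x)$. *)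

theory Defs
  imports "HOL-Analysis.Analysis"
begin

definition geodesic_in :: "'a::metric_space set \<Rightarrow> (real \<Rightarrow> 'a) \<Rightarrow> 'a \<Rightarrow> 'a \<Rightarrow> bool" where
  "geodesic_in X g a b \<longleftrightarrow>
     g 0 = a \<and> g (dist a b) = b \<and> g ` {0..dist a b} \<subseteq> X \<and>
     (\<forall>s\<in>{0..dist a b}. \<forall>t\<in>{0..dist a b}. dist (g s) (g t) = \<bar>s - t\<bar>)"

definition pi_geodesic :: "'a::metric_space set \<Rightarrow> bool" where
  "pi_geodesic X \<longleftrightarrow> (\<forall>a\<in>X. \<forall>b\<in>X. dist a b < pi \<longrightarrow> (\<exists>g. geodesic_in X g a b))"

definition on_S2 :: "real^3 \<Rightarrow> bool" where
  "on_S2 P \<longleftrightarrow> norm P = 1"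

definition sdist :: "real^3 \<Rightarrow> real^3 \<Rightarrow> real" where
  "sdist P Q = arccos (P \<bullet> Q)"

text \<open>Unit-speed great-circle geodesic from A to B in S^2 (for sdist A B < pi),
  evaluated at arclength s.\<close>
definition sgeod :: "real^3 \<Rightarrow> real^3 \<Rightarrow> real \<Rightarrow> real^3" where
  "sgeod A B s =
     (if A = B then A
      else (let \<theta> = sdist A B in
            (sin (\<theta> - s) / sin \<theta>) *\<^sub>R A + (sin s / sin \<theta>) *\<^sub>R B))"

text \<open>CAT(1) inequality for the geodesic triangle with vertices p, q, r and sides
  g1 (p to q), g2 (q to r), g3 (r to p): for the comparison triangle P, Q, R in S^2
  (same side lengths), distances between any two points of the triangle are at most
  the spherical distances of their comparison points.\<close>
definition cat1_triangle_ineq ::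
  "'a::metric_space \<Rightarrow> 'a \<Rightarrow> 'a \<Rightarrow> (real \<Rightarrow> 'a) \<Rightarrow> (real \<Rightarrow> 'a) \<Rightarrow> (real \<Rightarrow> 'a) \<Rightarrow> bool" where
  "cat1_triangle_ineq p q r g1 g2 g3 \<longleftrightarrow>
     (\<forall>P Q R. on_S2 P \<and> on_S2 Q \<and> on_S2 R \<and>
        sdist P Q = dist p q \<and> sdist Q R = dist q r \<and> sdist R P = dist r p \<longrightarrow>
        (let sides = {(g1, P, Q, dist p q), (g2, Q, R, dist q r), (g3, R, P, dist r p)} in
         \<forall>(g, A, B, l)\<in>sides. \<forall>(h, C, D, m)\<in>sides.
           \<forall>s\<in>{0..l}. \<forall>t\<in>{0..m}. dist (g s) (h t) \<le> sdist (sgeod A B s) (sgeod C D t)))"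

definition CAT1 :: "'a::metric_space set \<Rightarrow> bool" where
  "CAT1 X \<longleftrightarrow> pi_geodesic X \<and>
     (\<forall>p\<in>X. \<forall>q\<in>X. \<forall>r\<in>X. \<forall>g1 g2 g3.
        dist p q + dist q r + dist r p < 2 * pi \<and>
        geodesic_in X g1 p q \<and> geodesic_in X g2 q r \<and> geodesic_in X g3 r p \<longrightarrow>
        cat1_triangle_ineq p q r g1 g2 g3)"

definition admissible :: "'a::metric_space set \<Rightarrow> bool" where
  "admissible X \<longleftrightarrow> (\<forall>v\<in>X. \<forall>v'\<in>X. dist v v' < pi / 2)"

definition spherically_bounded :: "'a::metric_space set \<Rightarrow> (nat \<Rightarrow> 'a) \<Rightarrow> bool" where
  "spherically_bounded X x \<longleftrightarrow>
     (INF y\<in>X. limsup (\<lambda>n. ereal (dist (x n) y))) < ereal (pi / 2)"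

definition Fix :: "'a set \<Rightarrow> ('a \<Rightarrow> 'a) \<Rightarrow> 'a set" where
  "Fix X T = {u\<in>X. T u = u}"

definition vicinal :: "'a::metric_space set \<Rightarrow> ('a \<Rightarrow> 'a) \<Rightarrow> bool" where
  "vicinal X T \<longleftrightarrow>
     (\<forall>x\<in>X. \<forall>y\<in>X.
        let Cx = cos (dist (T x) x); Cy = cos (dist (T y) y) in
        (Cx\<^sup>2 * (1 + Cy\<^sup>2) + Cy\<^sup>2 * (1 + Cx\<^sup>2)) * cos (dist (T x) (T y))
          \<ge> Cx\<^sup>2 * (1 + Cy\<^sup>2) * cos (dist (T x) y) + Cy\<^sup>2 * (1 + Cx\<^sup>2) * cos (dist (T y) x))"

end

theory Submission
  imports Defs
begin

text \<open>Write \<open>r\<close> for the asymptotic radius of the orbit \<open>T\<^sup>n x\<close>, measured through cosines: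
  \<open>cos r\<close> is the supremum of the \<open>t\<close> such that eventually \<open>t \<le> cos (d(T\<^sup>n x, y))\<close> for
  some \<open>y\<close>; spherical boundedness makes it positive. The CAT(1) comparison with the spherical
  midpoint gives \<open>cos d(x,y) + cos d(x,z) \<le> 2 cos (d(y,z)/2) cos d(x,m)\<close> for the midpoint
  \<open>m\<close> of \<open>[y,z]\<close>; hence almost-optimal centres form a Cauchy sequence, completeness yields an
  asymptotic centre \<open>u\<close>, and the same inequality shows that it is unique. Vicinality, applied
  to \<open>T\<^sup>n x\<close> and \<open>u\<close>, makes the deficit of \<open>T u\<close> as a centre contract geometrically, because
  consecutive orbit points stay uniformly below distance \<open>\<pi>/2\<close>. So \<open>T u\<close> is an asymptotic
  centre as well, and \<open>T u = u\<close>.\<close>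

lemma inner_vector_3:
  "(vector [a1, a2, a3] :: real^3) \<bullet> vector [b1, b2, b3] = a1 * b1 + a2 * b2 + a3 * b3"
  by (simp add: inner_vec_def sum_3)

lemma on_S2_inner_self: "on_S2 A \<Longrightarrow> A \<bullet> A = 1"
  unfolding on_S2_def by (metis norm_eq_sqrt_inner real_sqrt_eq_1_iff)

lemma S2_triangle_exists:
  fixes a b c :: real
  assumes "0 \<le> a" "0 \<le> b" "0 < c" "c < pi" "b + c < pi"
    and "a \<le> b + c" "b \<le> a + c" "c \<le> a + b"
  shows "\<exists>P Q R. on_S2 P \<and> on_S2 Q \<and> on_S2 R \<and>
    P \<bullet> Q = cos b \<and> Q \<bullet> R = cos c \<and> R \<bullet> P = cos a"
proof -
  have sin_c: "sin c > 0" using assms by (intro sin_gt_zero) auto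
  define u where "u = (cos a - cos b * cos c) / sin c"
  have "cos (b + c) \<le> cos a"
    using assms by (subst cos_mono_le_eq) auto
  moreover have "cos a \<le> cos (b - c)"
  proof (cases "b \<le> c")
    case True
    then have "cos a \<le> cos (c - b)" using assms by (subst cos_mono_le_eq) auto
    then show ?thesis by (metis cos_minus minus_diff_eq)
  next
    case False
    then show ?thesis using assms by (subst cos_mono_le_eq) auto
  qed
  ultimately have "\<bar>cos a - cos b * cos c\<bar> \<le> sin b * sin c"
    by (simp add: cos_add cos_diff abs_le_iff)
  then have "\<bar>u\<bar> \<le> sin b" using sin_c by (simp add: u_def abs_divide divide_le_eq)
  moreover have "sin b \<ge> 0" using assms by (intro sin_ge_zero) auto
  ultimately have "u\<^sup>2 \<le> (sin b)\<^sup>2" by (metis abs_le_square_iff abs_of_nonneg)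
  then have "0 \<le> 1 - (cos b)\<^sup>2 - u\<^sup>2" using sin_squared_eq[of b] by linarith
  then obtain v where v: "v * v = 1 - (cos b)\<^sup>2 - u\<^sup>2"
    using real_sqrt_mult_self[of "1 - (cos b)\<^sup>2 - u\<^sup>2"] by (metis abs_of_nonneg)
  \<comment> \<open>\<open>u\<close> is forced by \<open>R \<bullet> P = cos a\<close>, and \<open>v\<close> makes \<open>P\<close> a unit vector.\<close>
  define P where "P = (vector [cos b, u, v] :: real^3)"
  define Q where "Q = (vector [1, 0, 0] :: real^3)"
  define R where "R = (vector [cos c, sin c, 0] :: real^3)"
  have "P \<bullet> P = 1" "Q \<bullet> Q = 1" "R \<bullet> R = 1"
    unfolding P_def Q_def R_def inner_vector_3 using v sin_cos_squared_add[of c]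
    by (simp_all add: power2_eq_square)
  moreover have "P \<bullet> Q = cos b" "Q \<bullet> R = cos c" "R \<bullet> P = cos a"
    unfolding P_def Q_def R_def inner_vector_3 u_def using sin_c by (simp_all add: field_simps)
  ultimately show ?thesis unfolding on_S2_def by (metis norm_eq_sqrt_inner real_sqrt_one)
qed

lemma sgeod_0:
  assumes "on_S2 A" "on_S2 B" "A \<bullet> B > -1"
  shows "sgeod A B 0 = A"
proof (cases "A = B")
  case False
  have "A \<bullet> B \<le> 1" using norm_cauchy_schwarz[of A B] assms unfolding on_S2_def by simp
  moreover have "A \<bullet> B \<noteq> 1"
  proof
    assume "A \<bullet> B = 1"
    then have "(A - B) \<bullet> (A - B) = 0"
      using on_S2_inner_self[OF assms(1)] on_S2_inner_self[OF assms(2)]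
      by (simp add: inner_diff inner_commute)
    then show False using False by simp
  qed
  ultimately have "0 < sdist A B" "sdist A B < pi"
    using assms arccos_lt_bounded[of "A \<bullet> B"] unfolding sdist_def by auto
  then have "sin (sdist A B) \<noteq> 0" using sin_gt_zero by force
  then show ?thesis using False by (simp add: sgeod_def Let_def)
qed (simp add: sgeod_def)

lemma sgeod_half:
  assumes "on_S2 P" "on_S2 Q" "on_S2 R" "Q \<bullet> R = cos c" "0 < c" "c < pi"
  shows "cos (sdist P (sgeod Q R (c/2))) = (P \<bullet> Q + P \<bullet> R) / (2 * cos (c/2))"
    and "sdist P (sgeod Q R (c/2)) \<le> pi"
proof -
  have cos_half: "cos (c/2) > 0" using assms by (intro cos_gt_zero_pi) auto
  have "sin (c/2) > 0" using assms by (intro sin_gt_zero) auto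
  moreover have "sin c = 2 * sin (c/2) * cos (c/2)" using sin_double[of "c/2"] by simp
  ultimately have ratio: "sin (c/2) / sin c = 1 / (2 * cos (c/2))" by simp
  have "Q \<noteq> R"
  proof
    assume "Q = R"
    then have "cos c = 1" using assms on_S2_inner_self by metis
    moreover have "cos c < 1" using assms cos_monotone_0_pi[of 0 c] by simp
    ultimately show False by simp
  qed
  moreover have "sdist Q R = c" unfolding sdist_def using assms by (simp add: arccos_cos)
  ultimately have M: "sgeod Q R (c/2) = (1 / (2 * cos (c/2))) *\<^sub>R (Q + R)"
    unfolding sgeod_def Let_def by (simp add: scaleR_add_right ratio)
  have "1 + cos c = 2 * (cos (c/2))\<^sup>2" using cos_double_cos[of "c/2"] by simp
  then have "norm (sgeod Q R (c/2)) = 1"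
    using on_S2_inner_self[OF assms(2)] on_S2_inner_self[OF assms(3)] assms(4) cos_half
    unfolding M by (simp add: norm_eq_sqrt_inner inner_add inner_commute field_simps power2_eq_square)
  then have bound: "\<bar>P \<bullet> sgeod Q R (c/2)\<bar> \<le> 1"
    using Cauchy_Schwarz_ineq2[of P "sgeod Q R (c/2)"] assms(1) unfolding on_S2_def by simp
  have "P \<bullet> sgeod Q R (c/2) = (P \<bullet> Q + P \<bullet> R) / (2 * cos (c/2))"
    unfolding M by (simp add: inner_add_right)
  then show "cos (sdist P (sgeod Q R (c/2))) = (P \<bullet> Q + P \<bullet> R) / (2 * cos (c/2))"
    using bound unfolding sdist_def by (metis abs_le_iff cos_arccos minus_le_iff)
  show "sdist P (sgeod Q R (c/2)) \<le> pi"
    using bound unfolding sdist_def by (intro arccos_ubound) (auto simp: abs_le_iff)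
qed

lemma cat1_triangle_ineqD:
  assumes "cat1_triangle_ineq p q r g1 g2 g3" "on_S2 P" "on_S2 Q" "on_S2 R"
    and "sdist P Q = dist p q" "sdist Q R = dist q r" "sdist R P = dist r p"
    and "s \<in> {0..dist p q}" "t \<in> {0..dist q r}"
  shows "dist (g1 s) (g2 t) \<le> sdist (sgeod P Q s) (sgeod Q R t)"
  using assms unfolding cat1_triangle_ineq_def Let_def by fastforce

lemma admissible_dist_less: "admissible X \<Longrightarrow> y \<in> X \<Longrightarrow> z \<in> X \<Longrightarrow> dist y z < pi / 2"
  unfolding admissible_def by blast

lemma admissible_cos_dist_pos:
  assumes "admissible X" "y \<in> X" "z \<in> X"
  shows "0 < cos (dist y z)" and "0 < cos (dist y z / 2)"
  using admissible_dist_less[OF assms] zero_le_dist[of y z] pi_gt_zero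
  by (intro cos_gt_zero_pi; linarith)+

lemma admissible_CAT1_geodesic:
  assumes "CAT1 X" "admissible X" "p \<in> X" "q \<in> X"
  shows "\<exists>g. geodesic_in X g p q"
proof -
  have "dist p q < pi" using admissible_dist_less[OF assms(2-4)] pi_gt_zero by linarith
  then show ?thesis using assms unfolding CAT1_def pi_geodesic_def by blast
qed

lemma admissible_comparison_triangle:
  assumes adm: "admissible X" and X: "p \<in> X" "y \<in> X" "z \<in> X" and "y \<noteq> z"
  shows "\<exists>P Q R. on_S2 P \<and> on_S2 Q \<and> on_S2 R \<and>
    P \<bullet> Q = cos (dist p y) \<and> Q \<bullet> R = cos (dist y z) \<and> R \<bullet> P = cos (dist z p) \<and>
    sdist P Q = dist p y \<and> sdist Q R = dist y z \<and> sdist R P = dist z p"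
proof -
  have small: "dist p y < pi/2" "dist y z < pi/2" "dist z p < pi/2"
    using admissible_dist_less[OF adm] X by auto
  have "dist z p \<le> dist p y + dist y z" "dist p y \<le> dist z p + dist y z"
    "dist y z \<le> dist z p + dist p y"
    by (metis dist_commute dist_triangle add.commute)+
  then obtain P Q R where PQR: "on_S2 P" "on_S2 Q" "on_S2 R"
    "P \<bullet> Q = cos (dist p y)" "Q \<bullet> R = cos (dist y z)" "R \<bullet> P = cos (dist z p)"
    using S2_triangle_exists[of "dist z p" "dist p y" "dist y z"] small \<open>y \<noteq> z\<close> by auto
  moreover have "dist p y \<le> pi" "dist y z \<le> pi" "dist z p \<le> pi"
    using small pi_gt_zero by linarith+
  then have "sdist P Q = dist p y" "sdist Q R = dist y z" "sdist R P = dist z p"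
    unfolding sdist_def PQR by (auto intro!: arccos_cos)
  ultimately show ?thesis by blast
qed

text \<open>The comparison point of the midpoint of \<open>[y,z]\<close> is \<open>(Q + R) / (2 cos (d(y,z)/2))\<close>.\<close>

lemma CAT1_midpoint_cos_ineq:
  assumes cat: "CAT1 X" and adm: "admissible X" and yz: "y \<in> X" "z \<in> X"
  shows "\<exists>m\<in>X. \<forall>p\<in>X. cos (dist p y) + cos (dist p z) \<le> 2 * cos (dist y z / 2) * cos (dist p m)"
proof (cases "y = z")
  case True
  then show ?thesis using yz by (intro bexI[of _ y]) auto
next
  case False
  define c where "c = dist y z"
  have "c < pi/2" using admissible_dist_less[OF adm yz] unfolding c_def .
  moreover have "0 < c" using False unfolding c_def by simp
  ultimately have c: "0 < c" "c < pi" using pi_gt_zero by linarith+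
  obtain g where g: "geodesic_in X g y z" using admissible_CAT1_geodesic[OF cat adm yz] by blast
  have half: "c/2 \<in> {0..dist y z}" using c unfolding c_def by simp
  show ?thesis
  proof (intro bexI ballI)
    show "g (c/2) \<in> X" using g half unfolding geodesic_in_def by blast
    fix p assume pX: "p \<in> X"
    obtain g1 g3 where g1: "geodesic_in X g1 p y" and g3: "geodesic_in X g3 z p"
      using admissible_CAT1_geodesic[OF cat adm] pX yz by meson
    have "dist p y + dist y z + dist z p < 2 * pi"
      using admissible_dist_less[OF adm pX yz(1)] admissible_dist_less[OF adm yz]
        admissible_dist_less[OF adm yz(2) pX] pi_gt_zero by linarith
    then have tri: "cat1_triangle_ineq p y z g1 g g3"
      using cat pX yz g1 g g3 unfolding CAT1_def by blast
    obtain P Q R where PQR: "on_S2 P" "on_S2 Q" "on_S2 R"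
      "P \<bullet> Q = cos (dist p y)" "Q \<bullet> R = cos (dist y z)" "R \<bullet> P = cos (dist z p)"
      "sdist P Q = dist p y" "sdist Q R = dist y z" "sdist R P = dist z p"
      using admissible_comparison_triangle[OF adm pX yz False] by blast
    have "P \<bullet> Q > -1"
      using PQR(4) admissible_cos_dist_pos(1)[OF adm pX yz(1)] by simp
    moreover have "g1 0 = p" using g1 unfolding geodesic_in_def by blast
    ultimately have le: "dist p (g (c/2)) \<le> sdist P (sgeod Q R (c/2))"
      using cat1_triangle_ineqD[OF tri PQR(1-3) PQR(7-9), of 0 "c/2"] half sgeod_0[OF PQR(1,2)]
      by simp
    have "cos (sdist P (sgeod Q R (c/2))) \<le> cos (dist p (g (c/2)))"
      using le order_trans[OF zero_le_dist le] sgeod_half(2)[OF PQR(1-3) PQR(5)[folded c_def] c]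
      by (subst cos_mono_le_eq) auto
    moreover have "cos (sdist P (sgeod Q R (c/2))) = (cos (dist p y) + cos (dist p z)) / (2 * cos (c/2))"
      using sgeod_half(1)[OF PQR(1-3) PQR(5)[folded c_def] c] PQR(4,6)
      by (simp add: inner_commute dist_commute)
    moreover have "0 < cos (c/2)" using c by (intro cos_gt_zero_pi) auto
    ultimately show "cos (dist p y) + cos (dist p z) \<le> 2 * cos (dist y z / 2) * cos (dist p (g (c/2)))"
      unfolding c_def by (simp add: divide_le_eq mult.commute)
  qed
qed

text \<open>For admissible \<open>X\<close>, \<open>asymp_cos_radius X xs\<close> is \<open>cos r\<close>, where \<open>r\<close> is the asymptotic
  radius \<open>inf\<^sub>y limsup\<^sub>n d(xs n, y)\<close> of \<open>xs\<close> in \<open>X\<close>.\<close>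

definition asymp_cos_lb :: "(nat \<Rightarrow> 'a::metric_space) \<Rightarrow> 'a \<Rightarrow> real \<Rightarrow> bool" where
  "asymp_cos_lb xs y t \<longleftrightarrow> (\<forall>\<^sub>F n in sequentially. t \<le> cos (dist (xs n) y))"

definition asymp_cos_radius :: "'a::metric_space set \<Rightarrow> (nat \<Rightarrow> 'a) \<Rightarrow> real" where
  "asymp_cos_radius X xs = Sup {t. \<exists>y\<in>X. asymp_cos_lb xs y t}"

lemma asymp_cos_lb_mono: "asymp_cos_lb xs y t \<Longrightarrow> t' \<le> t \<Longrightarrow> asymp_cos_lb xs y t'"
  unfolding asymp_cos_lb_def by (auto elim: eventually_mono)

lemma asymp_cos_lb_le_1:
  assumes "asymp_cos_lb xs y t"
  shows "t \<le> 1"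
proof -
  obtain n where "t \<le> cos (dist (xs n) y)"
    using assms unfolding asymp_cos_lb_def eventually_sequentially by blast
  then show ?thesis using cos_le_one order_trans by blast
qed

lemma bdd_above_asymp_cos_lb: "bdd_above {t. \<exists>y\<in>X. asymp_cos_lb xs y t}"
  unfolding bdd_above_def using asymp_cos_lb_le_1 by blast

lemma asymp_cos_radius_ge: "y \<in> X \<Longrightarrow> asymp_cos_lb xs y t \<Longrightarrow> t \<le> asymp_cos_radius X xs"
  unfolding asymp_cos_radius_def by (intro cSup_upper bdd_above_asymp_cos_lb) blast

lemma asymp_cos_lb_less_radius:
  assumes "y \<in> X" "asymp_cos_lb xs y t0" "t < asymp_cos_radius X xs"
  shows "\<exists>y\<in>X. asymp_cos_lb xs y t"
proof -
  obtain t' where "t < t'" "\<exists>y\<in>X. asymp_cos_lb xs y t'"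
    using less_cSupD[of "{t. \<exists>y\<in>X. asymp_cos_lb xs y t}"] assms
    unfolding asymp_cos_radius_def by blast
  then show ?thesis using asymp_cos_lb_mono less_imp_le by blast
qed

lemma abs_cos_diff_le: "\<bar>cos a - cos b\<bar> \<le> \<bar>a - b\<bar>" for a b :: real
proof -
  have "\<bar>cos a - cos b\<bar> = 2 * \<bar>sin ((a + b) / 2)\<bar> * \<bar>sin ((b - a) / 2)\<bar>"
    by (simp add: cos_diff_cos abs_mult)
  also have "\<dots> \<le> 2 * 1 * \<bar>(b - a) / 2\<bar>"
    by (intro mult_mono abs_sin_x_le_abs_x) auto
  finally show ?thesis by simp
qed

lemma asymp_cos_lb_move: "asymp_cos_lb xs y t \<Longrightarrow> asymp_cos_lb xs u (t - dist y u)"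
  unfolding asymp_cos_lb_def
proof (erule eventually_mono)
  fix n assume "t \<le> cos (dist (xs n) y)"
  moreover have "\<bar>cos (dist (xs n) y) - cos (dist (xs n) u)\<bar> \<le> \<bar>dist (xs n) y - dist (xs n) u\<bar>"
    by (rule abs_cos_diff_le)
  moreover have "\<bar>dist (xs n) y - dist (xs n) u\<bar> \<le> dist y u"
    by (metis abs_dist_diff_le dist_commute)
  ultimately show "t - dist y u \<le> cos (dist (xs n) u)" by linarith
qed

lemma asymp_cos_lb_pair_le:
  assumes cat: "CAT1 X" and adm: "admissible X" and xs: "\<And>n. xs n \<in> X" and yz: "y \<in> X" "z \<in> X"
    and lb: "asymp_cos_lb xs y t1" "asymp_cos_lb xs z t2"
  shows "(t1 + t2) / 2 \<le> asymp_cos_radius X xs * cos (dist y z / 2)"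
proof -
  define k where "k = cos (dist y z / 2)"
  have k: "0 < k" using admissible_cos_dist_pos(2)[OF adm yz] unfolding k_def .
  obtain m where mX: "m \<in> X" and m: "\<forall>p\<in>X. cos (dist p y) + cos (dist p z) \<le> 2 * k * cos (dist p m)"
    using CAT1_midpoint_cos_ineq[OF cat adm yz] unfolding k_def by blast
  have "asymp_cos_lb xs m ((t1 + t2) / (2 * k))"
    using eventually_conj[OF lb[unfolded asymp_cos_lb_def]] unfolding asymp_cos_lb_def
  proof (rule eventually_mono)
    fix n assume "t1 \<le> cos (dist (xs n) y) \<and> t2 \<le> cos (dist (xs n) z)"
    moreover have "cos (dist (xs n) y) + cos (dist (xs n) z) \<le> 2 * k * cos (dist (xs n) m)"
      using m xs by blast
    ultimately have "t1 + t2 \<le> 2 * k * cos (dist (xs n) m)" by linarith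
    then show "(t1 + t2) / (2 * k) \<le> cos (dist (xs n) m)" using k by (simp add: divide_le_eq mult.commute)
  qed
  then have "(t1 + t2) / (2 * k) \<le> asymp_cos_radius X xs" by (rule asymp_cos_radius_ge[OF mX])
  then show ?thesis using k unfolding k_def by (simp add: divide_le_eq mult.commute)
qed

lemma asymp_cos_lb_Cauchy:
  assumes cat: "CAT1 X" and adm: "admissible X" and xs: "\<And>n. xs n \<in> X"
    and pos: "0 < asymp_cos_radius X xs" and Y: "\<And>k. Y k \<in> X"
    and lb: "\<And>k m. k \<le> m \<Longrightarrow> asymp_cos_lb xs (Y m) (asymp_cos_radius X xs - 1 / Suc k)"
  shows "Cauchy Y"
  unfolding Cauchy_def
proof (intro allI impI)
  fix e :: real assume "0 < e"
  define s where "s = asymp_cos_radius X xs"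
  define e' where "e' = min e (pi/2)"
  have e': "0 < e'" "e' \<le> e" "e' \<le> pi/2" using \<open>0 < e\<close> by (auto simp: e'_def)
  have "cos (e'/2) < cos 0" using e' pi_gt_zero by (intro cos_monotone_0_pi) linarith+
  then have "0 < (1 - cos (e'/2)) * s" using pos unfolding s_def by simp
  then obtain K where K: "inverse (real (Suc K)) < (1 - cos (e'/2)) * s"
    using reals_Archimedean by blast
  show "\<exists>M. \<forall>m\<ge>M. \<forall>n\<ge>M. dist (Y m) (Y n) < e"
  proof (intro exI allI impI)
    fix m n assume "K \<le> m" "K \<le> n"
    then have "s - 1 / Suc K \<le> s * cos (dist (Y m) (Y n) / 2)"
      using asymp_cos_lb_pair_le[OF cat adm xs Y Y lb[of K m] lb[of K n]] unfolding s_def by simp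
    then have "s * cos (e'/2) < s * cos (dist (Y m) (Y n) / 2)"
      using K by (simp add: inverse_eq_divide algebra_simps)
    then have "cos (e'/2) < cos (dist (Y m) (Y n) / 2)" using pos unfolding s_def by simp
    then have "dist (Y m) (Y n) / 2 < e'/2"
      using admissible_dist_less[OF adm Y Y, of m n] e' pi_gt_zero zero_le_dist[of "Y m" "Y n"]
      by (subst (asm) cos_mono_less_eq) linarith+
    then show "dist (Y m) (Y n) < e" using e' by linarith
  qed
qed

lemma asymp_center_exists:
  assumes cat: "CAT1 X" and adm: "admissible X" and comp: "complete X" and xs: "\<And>n. xs n \<in> X"
    and y0: "y0 \<in> X" "asymp_cos_lb xs y0 t0" and t0: "0 < t0"
  shows "\<exists>u\<in>X. \<forall>t < asymp_cos_radius X xs. asymp_cos_lb xs u t"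
proof -
  define s where "s = asymp_cos_radius X xs"
  have pos: "0 < s" using asymp_cos_radius_ge[OF y0] t0 unfolding s_def by linarith
  have "\<forall>k. \<exists>y. y \<in> X \<and> asymp_cos_lb xs y (s - 1 / Suc k)"
  proof
    fix k
    have "s - 1 / Suc k < s" by simp
    then show "\<exists>y. y \<in> X \<and> asymp_cos_lb xs y (s - 1 / Suc k)"
      using asymp_cos_lb_less_radius[OF y0] unfolding s_def by blast
  qed
  then obtain Y where Y: "\<forall>k. Y k \<in> X \<and> asymp_cos_lb xs (Y k) (s - 1 / Suc k)"
    using choice[of "\<lambda>k y. y \<in> X \<and> asymp_cos_lb xs y (s - 1 / Suc k)"] by blast
  have lb: "asymp_cos_lb xs (Y m) (s - 1 / Suc k)" if "k \<le> m" for k m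
  proof -
    have "1 / real (Suc m) \<le> 1 / Suc k" using that by (simp add: frac_le)
    then show ?thesis using Y asymp_cos_lb_mono by (metis diff_left_mono)
  qed
  have "Cauchy Y"
    by (rule asymp_cos_lb_Cauchy[OF cat adm xs pos[unfolded s_def]])
      (use Y lb in \<open>auto simp: s_def\<close>)
  then obtain u where uX: "u \<in> X" and lim: "Y \<longlonglongrightarrow> u"
    using completeE[OF comp] Y by blast
  have "asymp_cos_lb xs u t" if "t < s" for t
  proof -
    have gap: "0 < (s - t) / 2" using that by simp
    then obtain N1 where N1: "\<forall>n\<ge>N1. dist (Y n) u < (s - t) / 2"
      using lim unfolding lim_sequentially by blast
    obtain N2 where N2: "inverse (real (Suc N2)) < (s - t) / 2"
      using reals_Archimedean[OF gap] by blast
    define k where "k = max N1 N2"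
    have "asymp_cos_lb xs u (s - 1 / Suc N2 - dist (Y k) u)"
      using lb[of N2 k] unfolding k_def by (intro asymp_cos_lb_move) simp
    moreover have "dist (Y k) u < (s - t) / 2" using N1 unfolding k_def by simp
    moreover have "1 / real (Suc N2) < (s - t) / 2" using N2 by (simp add: inverse_eq_divide)
    ultimately show ?thesis by (elim asymp_cos_lb_mono) argo
  qed
  then show ?thesis using uX unfolding s_def by blast
qed

lemma asymp_center_unique:
  assumes cat: "CAT1 X" and adm: "admissible X" and xs: "\<And>n. xs n \<in> X"
    and uv: "u \<in> X" "v \<in> X" and pos: "0 < asymp_cos_radius X xs"
    and u: "\<forall>t < asymp_cos_radius X xs. asymp_cos_lb xs u t"
    and v: "\<forall>t < asymp_cos_radius X xs. asymp_cos_lb xs v t"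
  shows "u = v"
proof -
  define s where "s = asymp_cos_radius X xs"
  have "t \<le> s * cos (dist u v / 2)" if "t < s" for t
  proof -
    have "asymp_cos_lb xs u t" "asymp_cos_lb xs v t" using u v that unfolding s_def by auto
    from asymp_cos_lb_pair_le[OF cat adm xs uv this] show ?thesis unfolding s_def by simp
  qed
  then have "s \<le> s * cos (dist u v / 2)" by (rule dense_le)
  then have "1 \<le> cos (dist u v / 2)" using pos unfolding s_def by simp
  show "u = v"
  proof (rule ccontr)
    assume "u \<noteq> v"
    moreover have "dist u v < pi/2" using admissible_dist_less[OF adm uv] .
    moreover have "dist u v / 2 \<le> pi" using \<open>dist u v < pi/2\<close> pi_gt_zero by linarith
    ultimately have "cos (dist u v / 2) < cos 0" by (intro cos_monotone_0_pi) auto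
    with \<open>1 \<le> cos (dist u v / 2)\<close> show False by simp
  qed
qed

text \<open>The deficit \<open>max 0 (t' - g n)\<close> shrinks by the factor \<open>1 - k/4\<close> once \<open>c n \<ge> t'\<close>.\<close>

lemma deficit_contraction:
  fixes A B c g :: "nat \<Rightarrow> real"
  assumes k: "0 < k" and A: "\<And>n. k \<le> A n" "\<And>n. A n \<le> 2" and B: "\<And>n. 0 \<le> B n" "\<And>n. B n \<le> 2"
    and rec: "\<And>n. A n * c (Suc n) + B n * g n \<le> (A n + B n) * g (Suc n)"
    and c: "\<forall>\<^sub>F n in sequentially. t' \<le> c n" and "t < t'"
  shows "\<forall>\<^sub>F n in sequentially. t \<le> g n"
proof -
  define q where "q = 1 - k / 4"
  have q: "0 \<le> q" "q < 1" using k A(1)[of 0] A(2)[of 0] unfolding q_def by linarith+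
  obtain N where N: "\<And>n. N \<le> n \<Longrightarrow> t' \<le> c n" using c unfolding eventually_sequentially by blast
  define e where "e n = max 0 (t' - g n)" for n
  have step: "e (Suc n) \<le> q * e n" if "N \<le> n" for n
  proof -
    have "A n * t' \<le> A n * c (Suc n)"
      using N[of "Suc n"] that A(1)[of n] k by (intro mult_left_mono) auto
    then have "(A n + B n) * (t' - g (Suc n)) \<le> B n * (t' - g n)"
      using rec[of n] by (simp add: algebra_simps)
    also have "\<dots> \<le> B n * e n" using B(1)[of n] by (intro mult_left_mono) (auto simp: e_def)
    also have "\<dots> \<le> (A n + B n) * (q * e n)"
    proof -
      have "k / 4 * (A n + B n) \<le> k / 4 * 4" using A(2)[of n] B(2)[of n] k by (intro mult_left_mono) auto
      then have "B n \<le> q * (A n + B n)" using A(1)[of n] unfolding q_def by (simp add: algebra_simps)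
      from mult_right_mono[OF this, of "e n"] show ?thesis by (simp add: e_def ac_simps)
    qed
    finally have "t' - g (Suc n) \<le> q * e n" using A(1)[of n] B(1)[of n] k by simp
    moreover have "0 \<le> q * e n" using q by (simp add: e_def)
    ultimately show ?thesis unfolding e_def by simp
  qed
  have iter: "e (j + N) \<le> q ^ j * e N" for j
  proof (induction j)
    case (Suc j)
    have "e (Suc j + N) \<le> q * e (j + N)" using step[of "j + N"] by simp
    also have "\<dots> \<le> q * (q ^ j * e N)" using Suc q by (intro mult_left_mono) auto
    finally show ?case by simp
  qed simp
  have "(\<lambda>j. q ^ j * e N) \<longlonglongrightarrow> 0" using q by (intro tendsto_mult_left_zero LIMSEQ_power_zero) simp
  then have "(\<lambda>j. e (j + N)) \<longlonglongrightarrow> 0"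
  proof (rule tendsto_sandwich[rotated 3])
    show "\<forall>\<^sub>F j in sequentially. 0 \<le> e (j + N)" by (simp add: e_def)
    show "\<forall>\<^sub>F j in sequentially. e (j + N) \<le> q ^ j * e N" by (intro always_eventually allI iter)
  qed simp
  then have "e \<longlonglongrightarrow> 0" by (rule LIMSEQ_offset)
  moreover have "0 < t' - t" using \<open>t < t'\<close> by simp
  ultimately have "\<forall>\<^sub>F n in sequentially. e n < t' - t" by (rule order_tendstoD)
  then show ?thesis by eventually_elim (simp add: e_def)
qed

text \<open>Vicinality at \<open>(xs n, u)\<close> gives the recursion of \<open>deficit_contraction\<close> for
  \<open>g n = cos d(xs n, T u)\<close>, \<open>c n = cos d(xs n, u)\<close>, with \<open>k = cos\<^sup>2 \<sigma>\<close>.\<close>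

lemma vicinal_asymp_center:
  assumes adm: "admissible X" and TX: "T ` X \<subseteq> X" and vic: "vicinal X T"
    and xs: "\<And>n. xs n \<in> X" "\<And>n. xs (Suc n) = T (xs n)"
    and \<sigma>: "\<sigma> < pi/2" "\<And>n. dist (xs (Suc n)) (xs n) \<le> \<sigma>"
    and uX: "u \<in> X" and u: "\<forall>t<s. asymp_cos_lb xs u t" and "t < s"
  shows "asymp_cos_lb xs (T u) t"
proof -
  define C where "C = cos (dist (T u) u)"
  define Cx where "Cx n = cos (dist (xs (Suc n)) (xs n))" for n
  define A where "A n = (Cx n)\<^sup>2 * (1 + C\<^sup>2)" for n
  define B where "B n = C\<^sup>2 * (1 + (Cx n)\<^sup>2)" for n
  have C: "0 \<le> C" "C \<le> 1"
    using admissible_cos_dist_pos(1)[OF adm _ uX, of "T u"] TX uX unfolding C_def by auto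
  have "0 \<le> \<sigma>" using \<sigma>(2)[of 0] zero_le_dist order_trans by blast
  then have \<kappa>: "0 < cos \<sigma>" using \<sigma>(1) pi_gt_zero by (intro cos_gt_zero_pi) linarith+
  have Cx: "cos \<sigma> \<le> Cx n" "Cx n \<le> 1" for n
  proof -
    have "dist (xs (Suc n)) (xs n) \<le> \<sigma>" "\<sigma> \<le> pi" using \<sigma> pi_gt_zero by (blast, linarith)
    then show "cos \<sigma> \<le> Cx n" unfolding Cx_def using \<open>0 \<le> \<sigma>\<close> by (subst cos_mono_le_eq) auto
  qed (simp add: Cx_def)
  have sq_le_1: "(Cx n)\<^sup>2 \<le> 1" "C\<^sup>2 \<le> 1" for n
    using Cx[of n] \<kappa> C by (auto intro: power_le_one)
  have A: "(cos \<sigma>)\<^sup>2 \<le> A n" "A n \<le> 2" for n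
  proof -
    have "(cos \<sigma>)\<^sup>2 \<le> (Cx n)\<^sup>2" using Cx[of n] \<kappa> by (intro power_mono) auto
    then show "(cos \<sigma>)\<^sup>2 \<le> A n" unfolding A_def by (simp add: mult_le_cancel_left1 order_trans)
    show "A n \<le> 2" using mult_mono[OF sq_le_1(1)[of n], of "1 + C\<^sup>2" 2] sq_le_1(2)
      unfolding A_def by simp
  qed
  have B: "0 \<le> B n" "B n \<le> 2" for n
    using mult_mono[OF sq_le_1(2), of "1 + (Cx n)\<^sup>2" 2] sq_le_1(1)[of n] unfolding B_def by simp_all
  have rec: "A n * cos (dist (xs (Suc n)) u) + B n * cos (dist (xs n) (T u))
      \<le> (A n + B n) * cos (dist (xs (Suc n)) (T u))" for n
    using vic[unfolded vicinal_def, rule_format, OF xs(1)[of n] uX]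
    unfolding Let_def A_def B_def Cx_def C_def xs(2) by (simp add: dist_commute)
  have "asymp_cos_lb xs u ((t + s) / 2)" using u \<open>t < s\<close> by simp
  moreover have "0 < (cos \<sigma>)\<^sup>2" "t < (t + s) / 2" using \<kappa> \<open>t < s\<close> by auto
  ultimately show ?thesis
    using deficit_contraction[where c = "\<lambda>n. cos (dist (xs n) u)" and g = "\<lambda>n. cos (dist (xs n) (T u))",
        OF _ A B rec]
    unfolding asymp_cos_lb_def by blast
qed

lemma vicinal_fixed_point_exists:
  assumes cat: "CAT1 X" and adm: "admissible X" and comp: "complete X"
    and TX: "T ` X \<subseteq> X" and vic: "vicinal X T" and x0: "x0 \<in> X"
    and \<sigma>: "\<sigma> < pi/2" "\<And>n. dist ((T ^^ Suc n) x0) ((T ^^ n) x0) \<le> \<sigma>"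
    and y0: "y0 \<in> X" "asymp_cos_lb (\<lambda>n. (T ^^ n) x0) y0 t0" and t0: "0 < t0"
  shows "\<exists>u\<in>X. T u = u"
proof -
  define xs where "xs n = (T ^^ n) x0" for n
  have xs: "\<And>n. xs n \<in> X" "\<And>n. xs (Suc n) = T (xs n)"
    unfolding xs_def using x0 TX by (induct_tac n) auto
  have pos: "0 < asymp_cos_radius X xs"
    using asymp_cos_radius_ge[OF y0[folded xs_def]] t0 by linarith
  obtain u where uX: "u \<in> X" and u: "\<forall>t < asymp_cos_radius X xs. asymp_cos_lb xs u t"
    using asymp_center_exists[OF cat adm comp xs(1) y0[folded xs_def] t0] by blast
  have Tu: "asymp_cos_lb xs (T u) t" if "t < asymp_cos_radius X xs" for t
    by (rule vicinal_asymp_center[OF adm TX vic xs \<sigma>(1) _ uX u that]) (unfold xs_def, rule \<sigma>(2))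
  have "T u \<in> X" using TX uX by blast
  then have "T u = u"
    by (rule asymp_center_unique[OF cat adm xs(1) _ uX pos _ u]) (simp add: Tu)
  then show ?thesis using uX by blast
qed

lemma spherically_bounded_const:
  assumes "u \<in> X"
  shows "spherically_bounded X (\<lambda>n. u)"
proof -
  have "(INF y\<in>X. limsup (\<lambda>n. ereal (dist u y))) \<le> limsup (\<lambda>n. ereal (dist u u))"
    using assms by (rule INF_lower)
  also have "\<dots> = 0" by (simp add: Limsup_const zero_ereal_def)
  also have "\<dots> < ereal (pi / 2)" by simp
  finally show ?thesis unfolding spherically_bounded_def .
qed

lemma spherically_bounded_asymp_cos_lb:
  assumes "spherically_bounded X xs"
  shows "\<exists>y\<in>X. \<exists>t>0. asymp_cos_lb xs y t"
proof -
  obtain y where yX: "y \<in> X" and "limsup (\<lambda>n. ereal (dist (xs n) y)) < ereal (pi / 2)"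
    using assms unfolding spherically_bounded_def INF_less_iff by blast
  then obtain r0 where "limsup (\<lambda>n. ereal (dist (xs n) y)) < ereal r0" "ereal r0 < ereal (pi/2)"
    by (meson ereal_dense2)
  then have "\<forall>\<^sub>F n in sequentially. dist (xs n) y < r0" "r0 < pi/2"
    by (auto dest: Limsup_lessD)
  moreover define r where "r = max r0 0"
  moreover have r: "0 \<le> r" "r < pi/2" using \<open>r0 < pi/2\<close> pi_gt_zero unfolding r_def by linarith+
  ultimately have "asymp_cos_lb xs y (cos r)"
    unfolding asymp_cos_lb_def
    by (elim eventually_mono) (use r pi_gt_zero in \<open>subst cos_mono_le_eq; auto\<close>)
  moreover have "0 < cos r" using r pi_gt_zero by (intro cos_gt_zero_pi) linarith+
  ultimately show ?thesis using yX by blast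
qed

lemma SUP_ereal_less_imp_bound:
  fixes f :: "nat \<Rightarrow> real"
  assumes "(SUP n\<in>{1..}. ereal (f n)) < ereal c"
  shows "\<exists>\<sigma><c. \<forall>n. f (Suc n) \<le> \<sigma>"
proof -
  obtain \<sigma> where \<sigma>: "(SUP n\<in>{1..}. ereal (f n)) < ereal \<sigma>" "ereal \<sigma> < ereal c"
    using ereal_dense2[OF assms] by blast
  have "ereal (f (Suc n)) < ereal \<sigma>" for n
    by (rule order.strict_trans1[OF SUP_upper \<sigma>(1)]) simp
  then show ?thesis using \<sigma>(2) less_imp_le by auto
qed

theorem theorem4p1:
  fixes X :: "'a::metric_space set" and T :: "'a \<Rightarrow> 'a"
  assumes "CAT1 X" and "admissible X" and "complete X"
    and "T ` X \<subseteq> X" and "vicinal X T"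
  shows "Fix X T \<noteq> {} \<longleftrightarrow>
    (\<exists>x\<in>X. spherically_bounded X (\<lambda>n. (T ^^ n) x) \<and>
       (SUP n\<in>{1..}. ereal (dist ((T ^^ n) x) ((T ^^ (n - 1)) x))) < ereal (pi / 2))"
proof
  assume "Fix X T \<noteq> {}"
  then obtain u where uX: "u \<in> X" and "T u = u" unfolding Fix_def by blast
  then have orbit: "(T ^^ n) u = u" for n by (induction n) auto
  show "\<exists>x\<in>X. spherically_bounded X (\<lambda>n. (T ^^ n) x) \<and>
       (SUP n\<in>{1..}. ereal (dist ((T ^^ n) x) ((T ^^ (n - 1)) x))) < ereal (pi / 2)"
  proof (intro bexI conjI)
    show "spherically_bounded X (\<lambda>n. (T ^^ n) u)"
      using spherically_bounded_const[OF uX] by (simp add: orbit)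
    show "(SUP n\<in>{1..}. ereal (dist ((T ^^ n) u) ((T ^^ (n - 1)) u))) < ereal (pi / 2)"
      by (simp add: orbit zero_ereal_def)
  qed (rule uX)
next
  assume "\<exists>x\<in>X. spherically_bounded X (\<lambda>n. (T ^^ n) x) \<and>
       (SUP n\<in>{1..}. ereal (dist ((T ^^ n) x) ((T ^^ (n - 1)) x))) < ereal (pi / 2)"
  then obtain x where xX: "x \<in> X" and "spherically_bounded X (\<lambda>n. (T ^^ n) x)"
    and "(SUP n\<in>{1..}. ereal (dist ((T ^^ n) x) ((T ^^ (n - 1)) x))) < ereal (pi / 2)"
    by blast
  moreover obtain \<sigma> where \<sigma>: "\<sigma> < pi / 2" "\<And>n. dist ((T ^^ Suc n) x) ((T ^^ n) x) \<le> \<sigma>"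
    using SUP_ereal_less_imp_bound[OF calculation(3)] by auto
  ultimately obtain y t where "y \<in> X" "asymp_cos_lb (\<lambda>n. (T ^^ n) x) y t" "0 < t"
    using spherically_bounded_asymp_cos_lb by blast
  then show "Fix X T \<noteq> {}"
    using vicinal_fixed_point_exists[OF assms xX \<sigma>] unfolding Fix_def by blast
qed

end
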